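(* Let $p\ge2$ and $N\ge m$. For almost all $(A,y)\in\mathbb R^{m\times N}\times\mathbb R^m$ (with respect to Lebesgue measure), the unique optimal solution $x^*$ of $\min_{x\in\mathbb R^N}\|x\|_p$ subject to $Ax=y$ satisfies $|\mathrm{supp}(x^* )|=N$.
   Context: $\|x\|_p:=(\sum_i|x_i|^p)^{1/p}$; $\mathrm{supp}(x)=\{i:x_i\ne0\}$. "For almost all" means outside a set of Lebesgue measure zero. *)

theory Defs
  imports "HOL-Analysis.Analysis"
begin

definition lp_norm :: "real \<Rightarrow> real ^ 'n \<Rightarrow> real" where
  "lp_norm p x = (\<Sum>i\<in>UNIV. \<bar>x $ i\<bar> powr p) powr (1 / p)"

definition supp :: "real ^ 'n \<Rightarrow> 'n set" where
  "supp x = {i. x $ i \<noteq> 0}"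

definition lp_optimal :: "real \<Rightarrow> real ^ 'n ^ 'm \<Rightarrow> real ^ 'm \<Rightarrow> real ^ 'n \<Rightarrow> bool" where
  "lp_optimal p A y x \<longleftrightarrow> A *v x = y \<and> (\<forall>z. A *v z = y \<longrightarrow> lp_norm p x \<le> lp_norm p z)"

end

theory Submission
  imports Defs
begin

text \<open>Since \<open>t \<mapsto> \<bar>t\<bar>\<^sup>p\<close> is strictly convex and \<open>C\<^sup>1\<close>, a minimiser \<open>x\<close> exists, is unique, and
  satisfies the Lagrange condition \<open>A\<^sup>T l = \<psi>(x)\<close> with \<open>\<psi>(t) = sgn t \<bar>t\<bar>\<^sup>p\<^sup>-\<^sup>1\<close> applied
  entrywise. If \<open>y \<noteq> 0\<close> then \<open>l \<noteq> 0\<close>, so some \<open>l\<^sub>k \<noteq> 0\<close> and the condition can be solved for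
  row \<open>k\<close> of \<open>A\<close>. Hence every data \<open>(A, y)\<close> with a sparse minimiser is the image of a point
  with \<open>x\<^sub>j = 0\<close> under a map from \<open>\<real>\<^sup>m\<^sup>N\<^sup>+\<^sup>m\<close> to itself, differentiable when \<open>p \<ge> 2\<close>;
  as the image of a hyperplane it is null. The same device, with a linear dependence among
  the rows in place of the Lagrange condition, shows that rank-deficient \<open>A\<close> are null.\<close>

definition signed_powr :: "real \<Rightarrow> real \<Rightarrow> real" where
  "signed_powr p t = sgn t * \<bar>t\<bar> powr (p - 1)"

lemma signed_powr_pos: "t > 0 \<Longrightarrow> signed_powr p t = t powr (p - 1)"
  by (simp add: signed_powr_def)

lemma signed_powr_neg: "t < 0 \<Longrightarrow> signed_powr p t = - ((- t) powr (p - 1))"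
  by (simp add: signed_powr_def)

lemma signed_powr_0 [simp]: "signed_powr p 0 = 0"
  by (simp add: signed_powr_def)

lemma signed_powr_eq_0_iff [simp]: "signed_powr p t = 0 \<longleftrightarrow> t = 0"
  by (simp add: signed_powr_def sgn_if)

lemma signed_powr_2 [simp]: "signed_powr 2 t = t"
  by (simp add: signed_powr_def sgn_if)

lemma signed_powr_strict_mono:
  assumes "p > 1" shows "strict_mono (signed_powr p)"
proof
  fix s t :: real assume "s < t"
  then consider "0 \<le> s" | "t \<le> 0" | "s < 0" "0 < t" by linarith
  then show "signed_powr p s < signed_powr p t"
  proof cases
    case 1
    then show ?thesis using \<open>s < t\<close> assms
      by (cases "s = 0") (auto simp: signed_powr_pos powr_less_mono2)
  next
    case 2
    then show ?thesis using \<open>s < t\<close> assms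
      by (cases "t = 0") (auto simp: signed_powr_neg powr_less_mono2)
  next
    case 3
    have "0 < (- s) powr (p - 1)" "0 < t powr (p - 1)" using 3 by auto
    then show ?thesis using signed_powr_pos[OF 3(2), of p] signed_powr_neg[OF 3(1), of p] by linarith
  qed
qed

lemma abs_powr_has_real_derivative:
  assumes "p > 1"
  shows "((\<lambda>t. \<bar>t\<bar> powr p) has_real_derivative p * signed_powr p t) (at t)"
proof -
  consider "t > 0" | "t < 0" | "t = 0" by linarith
  then show ?thesis
  proof cases
    case 1
    have "((\<lambda>t. t powr p) has_real_derivative p * signed_powr p t) (at t)"
      using has_real_derivative_powr[OF 1] 1 by (simp add: signed_powr_pos)
    then show ?thesis
      by (rule has_field_derivative_transform_within_open[where S="{0<..}"]) (use 1 in auto)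
  next
    case 2
    have "((\<lambda>t. (- t) powr p) has_real_derivative p * signed_powr p t) (at t)"
      using 2 by (auto intro!: derivative_eq_intros simp: signed_powr_neg)
    then show ?thesis
      by (rule has_field_derivative_transform_within_open[where S="{..<0}"]) (use 2 in auto)
  next
    case 3
    have "((\<lambda>s. \<bar>s\<bar> powr (p - 1)) \<longlongrightarrow> 0) (at 0)"
      using assms by (auto intro!: tendsto_eq_intros)
    then have "((\<lambda>s. (\<bar>s\<bar> powr p - \<bar>0\<bar> powr p) / (s - 0)) \<longlongrightarrow> 0) (at 0)"
      by (rule tendsto_norm_zero_cancel[OF Lim_transform_eventually])
         (auto simp: eventually_at_filter abs_divide powr_diff)
    then show ?thesis using 3 by (simp add: has_field_derivative_iff)
  qed
qed

text \<open>This is where \<open>p \<ge> 2\<close> enters: for \<open>1 < p < 2\<close> the function \<open>signed_powr p\<close> has a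
  vertical tangent at the origin, and the parametrisation \<open>kkt_param\<close> below is no longer
  differentiable.\<close>

lemma signed_powr_differentiable:
  assumes "p \<ge> 2"
  shows "signed_powr p differentiable (at t)"
proof -
  consider "t > 0" | "t < 0" | "t = 0" "p > 2" | "p = 2" using assms by linarith
  then have "\<exists>D. (signed_powr p has_real_derivative D) (at t)"
  proof cases
    case 1
    have "((\<lambda>t. t powr (p - 1)) has_real_derivative (p - 1) * t powr (p - 1 - 1)) (at t)"
      using 1 by (rule has_real_derivative_powr)
    then have "(signed_powr p has_real_derivative (p - 1) * t powr (p - 1 - 1)) (at t)"
      by (rule has_field_derivative_transform_within_open[where S="{0<..}"])
         (use 1 in \<open>auto simp: signed_powr_pos\<close>)
    then show ?thesis ..
  next
    case 2
    have "((\<lambda>t. - ((- t) powr (p - 1))) has_real_derivative (p - 1) * (- t) powr (p - 1 - 1)) (at t)"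
      using 2 by (auto intro!: derivative_eq_intros)
    then have "(signed_powr p has_real_derivative (p - 1) * (- t) powr (p - 1 - 1)) (at t)"
      by (rule has_field_derivative_transform_within_open[where S="{..<0}"])
         (use 2 in \<open>auto simp: signed_powr_neg\<close>)
    then show ?thesis ..
  next
    case 3
    have "((\<lambda>s. \<bar>s\<bar> powr (p - 2)) \<longlongrightarrow> 0) (at 0)"
      using 3 by (auto intro!: tendsto_eq_intros)
    then have "((\<lambda>s. (signed_powr p s - signed_powr p 0) / (s - 0)) \<longlongrightarrow> 0) (at 0)"
      by (rule Lim_transform_eventually)
         (auto simp: eventually_at_filter signed_powr_def powr_diff sgn_if power2_eq_square)
    then show ?thesis using 3 by (auto simp: has_field_derivative_iff)
  next
    case 4
    have "signed_powr 2 = (\<lambda>t. t)" by (rule ext) simp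
    then show ?thesis using 4 DERIV_ident by metis
  qed
  then show ?thesis
    using has_field_derivative_imp_has_derivative differentiable_def by blast
qed

definition lp_power_sum :: "real \<Rightarrow> real ^ 'n \<Rightarrow> real" where
  "lp_power_sum p x = (\<Sum>i\<in>UNIV. \<bar>x $ i\<bar> powr p)"

definition signed_powr_vec :: "real \<Rightarrow> real ^ 'n \<Rightarrow> real ^ 'n" where
  "signed_powr_vec p x = (\<chi> i. signed_powr p (x $ i))"

lemma lp_power_sum_nonneg: "lp_power_sum p x \<ge> 0"
  by (simp add: lp_power_sum_def sum_nonneg)

lemma lp_norm_le_iff:
  assumes "p > 0"
  shows "lp_norm p x \<le> lp_norm p z \<longleftrightarrow> lp_power_sum p x \<le> lp_power_sum p z"
proof -
  have "a powr (1 / p) \<le> b powr (1 / p) \<longleftrightarrow> a \<le> b" if "a \<ge> 0" "b \<ge> 0" for a b :: real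
    using that assms powr_mono2[of "1 / p" a b] powr_less_mono2[of "1 / p" b a] by force
  then show ?thesis
    unfolding lp_norm_def lp_power_sum_def[symmetric] by (simp add: lp_power_sum_nonneg)
qed

lemma lp_optimal_iff:
  "p > 0 \<Longrightarrow> lp_optimal p A y x \<longleftrightarrow>
     A *v x = y \<and> (\<forall>z. A *v z = y \<longrightarrow> lp_power_sum p x \<le> lp_power_sum p z)"
  by (simp add: lp_optimal_def lp_norm_le_iff)

lemma lp_power_sum_has_real_derivative_along:
  assumes "p > 1"
  shows "((\<lambda>s. lp_power_sum p (x + s *\<^sub>R w)) has_real_derivative p * (signed_powr_vec p x \<bullet> w)) (at 0)"
proof -
  have "((\<lambda>s. \<bar>x $ i + s * w $ i\<bar> powr p) has_real_derivative p * signed_powr p (x $ i) * w $ i) (at 0)"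
    for i
  proof -
    have "((\<lambda>s. x $ i + s * w $ i) has_real_derivative w $ i) (at 0)"
      by (auto intro!: derivative_eq_intros)
    from DERIV_chain2[OF abs_powr_has_real_derivative[OF assms] this] show ?thesis
      by simp
  qed
  then show ?thesis
    unfolding lp_power_sum_def signed_powr_vec_def inner_vec_def
    by (auto intro!: DERIV_sum simp: sum_distrib_left mult.assoc)
qed

lemma continuous_on_lp_power_sum: "p > 1 \<Longrightarrow> continuous_on S (lp_power_sum p)"
  unfolding lp_power_sum_def
  by (intro continuous_on_sum continuous_on_compose2[OF continuous_at_imp_continuous_on
        [OF ballI[OF DERIV_isCont[OF abs_powr_has_real_derivative]]]])
     (auto intro!: continuous_intros)

lemma lp_optimal_orthogonal_null_space:
  assumes "p > 1" "lp_optimal p A y x" "A *v w = 0"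
  shows "signed_powr_vec p x \<bullet> w = 0"
proof -
  have "A *v (x + s *\<^sub>R w) = y" for s
    using assms by (simp add: lp_optimal_def matrix_vector_right_distrib matrix_vector_mult_scaleR)
  then have "lp_power_sum p (x + 0 *\<^sub>R w) \<le> lp_power_sum p (x + s *\<^sub>R w)" for s
    using assms(1,2) by (simp add: lp_optimal_iff)
  then have "p * (signed_powr_vec p x \<bullet> w) = 0"
    by (intro DERIV_local_min[OF lp_power_sum_has_real_derivative_along[OF assms(1)], of 1]) auto
  then show ?thesis using assms(1) by simp
qed

lemma strict_mono_diff_mult_pos:
  fixes f :: "real \<Rightarrow> real"
  assumes "strict_mono f" "s \<noteq> t"
  shows "(f s - f t) * (s - t) > 0"
  using assms by (cases "s < t") (auto simp: strict_mono_def mult_pos_pos mult_neg_neg)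

lemma lp_optimal_unique:
  assumes "p > 1" "lp_optimal p A y x" "lp_optimal p A y z"
  shows "x = z"
proof -
  define d where "d i = (signed_powr p (x $ i) - signed_powr p (z $ i)) * (x $ i - z $ i)" for i
  have d_pos: "x $ i \<noteq> z $ i \<Longrightarrow> d i > 0" for i
    using strict_mono_diff_mult_pos[OF signed_powr_strict_mono[OF assms(1)]] by (simp add: d_def)
  have "A *v (x - z) = 0"
    using assms by (simp add: lp_optimal_def matrix_vector_mult_diff_distrib)
  then have "signed_powr_vec p x \<bullet> (x - z) = 0" "signed_powr_vec p z \<bullet> (x - z) = 0"
    using lp_optimal_orthogonal_null_space[OF assms(1)] assms(2,3) by auto
  then have "(signed_powr_vec p x - signed_powr_vec p z) \<bullet> (x - z) = 0"
    by (simp add: inner_diff_left)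
  then have "sum d UNIV = 0"
    by (simp add: d_def signed_powr_vec_def inner_vec_def)
  moreover have "d i \<ge> 0" for i
    using d_pos[of i] by (cases "x $ i = z $ i") (auto simp: d_def)
  ultimately have "d i = 0" for i
    by (simp add: sum_nonneg_eq_0_iff)
  then show ?thesis
    using d_pos by (metis less_irrefl vec_eq_iff)
qed

lemma lp_optimal_exists:
  fixes A :: "real ^ 'n ^ 'm"
  assumes "p > 1" "A *v x0 = y"
  shows "\<exists>x. lp_optimal p A y x"
proof -
  define C where "C = lp_power_sum p x0"
  define K where "K = {z. A *v z = y} \<inter> {z. lp_power_sum p z \<le> C}"
  have "closed K"
    unfolding K_def
    by (intro closed_Int closed_Collect_eq closed_Collect_le continuous_on_lp_power_sum assms)
       (auto intro: continuous_intros linear_continuous_on matrix_vector_mul_linear_gen)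
  moreover have "bounded K"
    unfolding bounded_iff
  proof (intro exI ballI)
    fix z assume "z \<in> K"
    have "\<bar>z $ i\<bar> powr p \<le> C" for i
      using member_le_sum[of i UNIV "\<lambda>i. \<bar>z $ i\<bar> powr p"] \<open>z \<in> K\<close>
      by (simp add: K_def lp_power_sum_def)
    then have "(\<bar>z $ i\<bar> powr p) powr (1 / p) \<le> C powr (1 / p)" for i
      using assms(1) by (intro powr_mono2) auto
    then have "\<bar>z $ i\<bar> \<le> C powr (1 / p)" for i
      using assms(1) by (simp add: powr_powr)
    then have "(\<Sum>i\<in>UNIV. \<bar>z $ i\<bar>) \<le> CARD('n) * C powr (1 / p)"
      using sum_mono[of UNIV "\<lambda>i. \<bar>z $ i\<bar>" "\<lambda>_. C powr (1 / p)"] by simp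
    then show "norm z \<le> CARD('n) * C powr (1 / p)"
      using norm_le_l1_cart[of z] by simp
  qed
  moreover have "x0 \<in> K"
    using assms by (simp add: K_def C_def)
  ultimately obtain x where "x \<in> K" and x_min: "\<And>z. z \<in> K \<Longrightarrow> lp_power_sum p x \<le> lp_power_sum p z"
    using continuous_attains_inf[of K "lp_power_sum p"] continuous_on_lp_power_sum[OF assms(1)]
    by (metis compact_eq_bounded_closed empty_iff)
  then have "lp_optimal p A y x"
    using assms(1) by (force simp: lp_optimal_iff K_def)
  then show ?thesis ..
qed

lemma in_range_transpose_if_orthogonal_null_space:
  fixes M :: "real ^ 'a ^ 'b"
  assumes "\<And>v. M *v v = 0 \<Longrightarrow> w \<bullet> v = 0"
  shows "\<exists>l. transpose M *v l = w"
proof -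
  let ?U = "range (\<lambda>l. transpose M *v l)"
  have "subspace ?U"
    by (intro subspace_UNIV linear_subspace_image matrix_vector_mul_linear)
  obtain u z where u: "u \<in> span ?U" and z: "\<And>q. q \<in> span ?U \<Longrightarrow> orthogonal z q"
    and wz: "w = u + z"
    using orthogonal_subspace_decomp_exists[of ?U w] by blast
  have "(M *v z) \<bullet> (M *v z) = (transpose M *v (M *v z)) \<bullet> z"
    by (simp add: dot_lmul_matrix)
  also have "\<dots> = 0"
    using z[of "transpose M *v (M *v z)"] by (auto simp: span_base orthogonal_def inner_commute)
  finally have "w \<bullet> z = 0"
    using assms by simp
  moreover have "u \<bullet> z = 0"
    using z[OF u] by (simp add: orthogonal_def inner_commute)
  ultimately have "z = 0"
    using wz by (simp add: inner_add_left)
  then have "w \<in> ?U"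
    using u wz \<open>subspace ?U\<close> by (metis span_eq_iff add_0_right)
  then show ?thesis by auto
qed

lemma lp_optimal_multiplier:
  assumes "p > 1" "lp_optimal p A y x"
  shows "\<exists>l. transpose A *v l = signed_powr_vec p x"
  using in_range_transpose_if_orthogonal_null_space lp_optimal_orthogonal_null_space[OF assms]
  by (metis inner_commute)

lemma differentiable_vec_lambda:
  fixes f :: "'a::real_normed_vector \<Rightarrow> 'k::finite \<Rightarrow> 'b::euclidean_space"
  assumes "\<And>i. (\<lambda>x. f x i) differentiable (at y within S)"
  shows "(\<lambda>x. vec_lambda (f x)) differentiable (at y within S)"
proof -
  have "(\<lambda>x. vec_lambda (f x) \<bullet> axis i u) differentiable (at y within S)" for i u
    using differentiable_inner[OF assms differentiable_const] by (simp add: inner_axis)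
  then show ?thesis
    unfolding differentiable_componentwise_within[of "\<lambda>x. vec_lambda (f x)"]
    by (auto simp: Basis_vec_def)
qed

lemma differentiable_vec_nth:
  "f differentiable F \<Longrightarrow> (\<lambda>x. f x $ i) differentiable F"
  unfolding differentiable_def using bounded_linear.has_derivative[OF bounded_linear_vec_nth] by blast

lemma differentiable_matrix_vector_mult:
  fixes A :: "'a::real_normed_vector \<Rightarrow> real ^ 'n ^ 'm"
  assumes "A differentiable (at y within S)" "x differentiable (at y within S)"
  shows "(\<lambda>z. A z *v x z) differentiable (at y within S)"
proof -
  have "(\<lambda>z. A z $ i $ j * x z $ j) differentiable (at y within S)" for i j
    using assms by (intro differentiable_mult differentiable_vec_nth)
  then show ?thesis
    unfolding matrix_vector_mult_def by (auto intro: differentiable_vec_lambda)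
qed

lemma signed_powr_vec_differentiable:
  assumes "p \<ge> 2"
  shows "signed_powr_vec p differentiable (at x)"
proof -
  have "(\<lambda>x. signed_powr p (x $ i)) differentiable (at x)" for i
    using differentiable_compose[OF signed_powr_differentiable[OF assms]
        differentiable_vec_nth[OF differentiable_ident]] .
  then show ?thesis
    unfolding signed_powr_vec_def by (rule differentiable_vec_lambda)
qed

lemma negligible_fst_component_eq_0:
  "negligible {z :: (real ^ 'n ^ 'm) \<times> 'b::euclidean_space. fst z $ k $ j = 0}"
proof -
  define c :: "(real ^ 'n ^ 'm) \<times> 'b" where "c = (axis k (axis j 1), 0)"
  have "c \<bullet> z = fst z $ k $ j" for z
    by (cases z) (simp add: c_def inner_Pair inner_axis')
  moreover have "c \<noteq> 0"
    by (simp add: c_def zero_prod_def axis_eq_0_iff)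
  ultimately show ?thesis
    using negligible_hyperplane[of c 0] by simp
qed

lemma negligible_snd_eq_0:
  "negligible {z :: 'a::euclidean_space \<times> 'b::euclidean_space. snd z = 0}"
proof -
  obtain b :: 'b where "b \<in> Basis" using nonempty_Basis by blast
  then have "{z :: 'a \<times> 'b. snd z = 0} \<subseteq> {z. (0, b) \<bullet> z = 0}" "(0 :: 'a, b) \<noteq> 0"
    by (auto simp: inner_commute zero_prod_def nonzero_Basis)
  then show ?thesis
    using negligible_subset[OF negligible_hyperplane[of "(0 :: 'a, b)" 0]] by blast
qed

lemma transpose_mult_vector_eq_row_sum:
  "transpose A *v l = (\<Sum>i\<in>UNIV. l $ i *\<^sub>R A $ i)"
  by (simp add: matrix_vector_column scalar_mult_eq_scaleR)

lemma differentiable_fst: "fst differentiable F"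
  and differentiable_snd: "snd differentiable F"
  by (intro bounded_linear_imp_differentiable bounded_linear_fst bounded_linear_snd)+

text \<open>Row \<open>k\<close> of \<open>B\<close> stores the coefficients expressing row \<open>k\<close> of the image through the
  other rows, at the positions \<open>g i\<close>. The entry at \<open>g k\<close> is never read, so the image of the
  hyperplane where it vanishes already contains every matrix with linearly dependent rows.\<close>

definition dependent_row_param ::
    "('m \<Rightarrow> 'n) \<Rightarrow> 'm \<Rightarrow> (real ^ 'n ^ 'm) \<times> 'b \<Rightarrow> (real ^ 'n ^ 'm) \<times> 'b" where
  "dependent_row_param g k z =
     ((\<chi> i. if i = k then - (\<Sum>i'\<in>UNIV - {k}. fst z $ k $ g i' *\<^sub>R fst z $ i') else fst z $ i),
      snd z)"

lemma differentiable_dependent_row_param: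
  "dependent_row_param g k differentiable (at z)"
proof -
  have "(\<lambda>z. fst z $ k $ g i' *\<^sub>R fst z $ i') differentiable (at z)" for i'
    by (intro differentiable_scaleR differentiable_vec_nth differentiable_fst)
  then have "(\<lambda>z. if i = k then - (\<Sum>i'\<in>UNIV - {k}. fst z $ k $ g i' *\<^sub>R fst z $ i') else fst z $ i)
      differentiable (at z)" for i
    by (cases "i = k") (simp_all add: differentiable_vec_nth differentiable_fst)
  then show ?thesis
    unfolding dependent_row_param_def
    by (intro differentiable_Pair differentiable_vec_lambda differentiable_snd)
qed

lemma rank_deficient_in_dependent_row_param_image:
  fixes A :: "real ^ 'n ^ 'm"
  assumes "transpose A *v l = 0" "l $ k \<noteq> 0" "inj g"
  shows "(A, y) \<in> dependent_row_param g k ` {z. fst z $ k $ g k = 0}"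
proof
  define B where "B = (\<chi> i. if i = k
      then (\<chi> j. if j \<in> g ` (UNIV - {k}) then l $ inv g j / l $ k else 0) else A $ i)"
  have "g k \<notin> g ` (UNIV - {k})"
    using assms(3) by (auto simp: inj_def)
  then show "(B, y) \<in> {z. fst z $ k $ g k = 0}"
    by (simp add: B_def)
  have "l $ k *\<^sub>R A $ k + (\<Sum>i\<in>UNIV - {k}. l $ i *\<^sub>R A $ i) = 0"
    using assms(1) transpose_mult_vector_eq_row_sum[of A l] sum.remove[of UNIV k "\<lambda>i. l $ i *\<^sub>R A $ i"]
    by simp
  then have row_sum: "(\<Sum>i\<in>UNIV - {k}. l $ i *\<^sub>R A $ i) = - (l $ k *\<^sub>R A $ k)"
    by (metis add.commute eq_neg_iff_add_eq_0)
  have "(\<Sum>i\<in>UNIV - {k}. (l $ i / l $ k) *\<^sub>R A $ i)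
      = inverse (l $ k) *\<^sub>R (\<Sum>i\<in>UNIV - {k}. l $ i *\<^sub>R A $ i)"
    by (simp add: scaleR_sum_right divide_inverse_commute)
  also have "\<dots> = - A $ k"
    using row_sum assms(2) by simp
  finally have "(\<Sum>i\<in>UNIV - {k}. (l $ i / l $ k) *\<^sub>R A $ i) = - A $ k" .
  moreover have "B $ k $ g i *\<^sub>R B $ i = (l $ i / l $ k) *\<^sub>R A $ i" if "i \<in> UNIV - {k}" for i
    using that by (auto simp: B_def inv_f_f[OF assms(3)])
  ultimately have "- (\<Sum>i\<in>UNIV - {k}. B $ k $ g i *\<^sub>R B $ i) = A $ k"
    by (metis (no_types, lifting) minus_minus sum.cong)
  then show "(A, y) = dependent_row_param g k (B, y)"
    by (simp add: dependent_row_param_def vec_eq_iff) (simp add: B_def)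
qed

text \<open>Row \<open>k\<close> of \<open>B\<close> stores a critical point \<open>x\<close> and \<open>l\<close> a Lagrange multiplier with
  \<open>l $ k \<noteq> 0\<close>; row \<open>k\<close> of the image is then the one solving \<open>A\<^sup>T l = signed_powr_vec p x\<close>.\<close>

definition kkt_matrix :: "real \<Rightarrow> 'm \<Rightarrow> real ^ 'n ^ 'm \<Rightarrow> real ^ 'm \<Rightarrow> real ^ 'n ^ 'm" where
  "kkt_matrix p k B l = (\<chi> i. if i = k
     then inverse (l $ k) *\<^sub>R (signed_powr_vec p (B $ k) - (\<Sum>i'\<in>UNIV - {k}. l $ i' *\<^sub>R B $ i'))
     else B $ i)"

definition kkt_param ::
    "real \<Rightarrow> 'm \<Rightarrow> (real ^ 'n ^ 'm) \<times> (real ^ 'm) \<Rightarrow> (real ^ 'n ^ 'm) \<times> (real ^ 'm)" where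
  "kkt_param p k z =
     (kkt_matrix p k (fst z) (snd z), kkt_matrix p k (fst z) (snd z) *v fst z $ k)"

lemma differentiable_kkt_param:
  assumes "p \<ge> 2" "snd z $ k \<noteq> 0"
  shows "kkt_param p k differentiable (at z)"
proof -
  have "(\<lambda>z. signed_powr_vec p (fst z $ k)) differentiable (at z)"
    by (rule differentiable_compose[OF signed_powr_vec_differentiable[OF assms(1)]])
       (intro differentiable_vec_nth differentiable_fst)
  moreover have "(\<lambda>z. snd z $ i' *\<^sub>R fst z $ i') differentiable (at z)" for i'
    by (intro differentiable_scaleR differentiable_vec_nth differentiable_fst differentiable_snd)
  moreover have "(\<lambda>z. inverse (snd z $ k)) differentiable (at z)"
    unfolding inverse_eq_divide
    by (intro differentiable_divide differentiable_const differentiable_vec_nth differentiable_snd assms(2))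
  ultimately have "(\<lambda>z. if i = k
      then inverse (snd z $ k) *\<^sub>R (signed_powr_vec p (fst z $ k) - (\<Sum>i'\<in>UNIV - {k}. snd z $ i' *\<^sub>R fst z $ i'))
      else fst z $ i) differentiable (at z)" for i
    by (cases "i = k") (simp_all add: differentiable_scaleR differentiable_vec_nth differentiable_fst)
  then have "(\<lambda>z. kkt_matrix p k (fst z) (snd z)) differentiable (at z)"
    unfolding kkt_matrix_def by (rule differentiable_vec_lambda)
  then show ?thesis
    unfolding kkt_param_def
    by (intro differentiable_Pair differentiable_matrix_vector_mult differentiable_vec_nth
        differentiable_fst)
qed

lemma sparse_kkt_point_in_kkt_param_image:
  fixes A :: "real ^ 'n ^ 'm"
  assumes "transpose A *v l = signed_powr_vec p x" "l $ k \<noteq> 0" "x $ j = 0"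
  shows "(A, A *v x) \<in> kkt_param p k ` {z. fst z $ k $ j = 0 \<and> snd z $ k \<noteq> 0}"
proof
  define B where "B = (\<chi> i. if i = k then x else A $ i)"
  have B_k: "B $ k = x" and B_other: "i \<noteq> k \<Longrightarrow> B $ i = A $ i" for i
    by (simp_all add: B_def)
  show "(B, l) \<in> {z. fst z $ k $ j = 0 \<and> snd z $ k \<noteq> 0}"
    using assms B_k by simp
  have "l $ k *\<^sub>R A $ k + (\<Sum>i\<in>UNIV - {k}. l $ i *\<^sub>R A $ i) = signed_powr_vec p x"
    using assms(1) transpose_mult_vector_eq_row_sum[of A l] sum.remove[of UNIV k "\<lambda>i. l $ i *\<^sub>R A $ i"]
    by simp
  moreover have "(\<Sum>i\<in>UNIV - {k}. l $ i *\<^sub>R B $ i) = (\<Sum>i\<in>UNIV - {k}. l $ i *\<^sub>R A $ i)"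
    using B_other by (intro sum.cong) auto
  ultimately have "signed_powr_vec p x - (\<Sum>i\<in>UNIV - {k}. l $ i *\<^sub>R B $ i) = l $ k *\<^sub>R A $ k"
    by (metis add_diff_cancel_right')
  then have "kkt_matrix p k B l $ i = A $ i" for i
    using assms(2) by (cases "i = k") (simp_all add: kkt_matrix_def B_k B_other)
  then have "kkt_matrix p k B l = A"
    by (simp add: vec_eq_iff)
  then show "(A, A *v x) = kkt_param p k (B, l)"
    by (simp add: kkt_param_def B_k)
qed

lemma negligible_rank_deficient:
  assumes "CARD('m::finite) \<le> CARD('n::finite)"
  shows "negligible {z :: (real ^ 'n ^ 'm) \<times> 'b::euclidean_space. \<exists>l. l \<noteq> 0 \<and> transpose (fst z) *v l = 0}"
proof -
  obtain g :: "'m \<Rightarrow> 'n" where "inj g"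
    using assms card_le_inj[of "UNIV :: 'm set" "UNIV :: 'n set"] by auto
  have "negligible (dependent_row_param g k ` {z :: (real ^ 'n ^ 'm) \<times> 'b. fst z $ k $ g k = 0})" for k
    by (intro negligible_differentiable_image_negligible[OF order_refl negligible_fst_component_eq_0]
        differentiable_at_imp_differentiable_on differentiable_dependent_row_param ballI)
  then have "negligible (\<Union>k. dependent_row_param g k ` {z :: (real ^ 'n ^ 'm) \<times> 'b. fst z $ k $ g k = 0})"
    by (intro negligible_Union) auto
  moreover have "{z :: (real ^ 'n ^ 'm) \<times> 'b. \<exists>l. l \<noteq> 0 \<and> transpose (fst z) *v l = 0}
      \<subseteq> (\<Union>k. dependent_row_param g k ` {z. fst z $ k $ g k = 0})"
  proof
    fix z :: "(real ^ 'n ^ 'm) \<times> 'b"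
    assume "z \<in> {z. \<exists>l. l \<noteq> 0 \<and> transpose (fst z) *v l = 0}"
    then obtain l k where "transpose (fst z) *v l = 0" "l $ k \<noteq> 0"
      by (auto simp: vec_eq_iff)
    from rank_deficient_in_dependent_row_param_image[OF this \<open>inj g\<close>, of "snd z"]
    show "z \<in> (\<Union>k. dependent_row_param g k ` {z. fst z $ k $ g k = 0})"
      by auto
  qed
  ultimately show ?thesis
    by (rule negligible_subset)
qed

lemma negligible_sparse_kkt:
  assumes "p \<ge> 2"
  shows "negligible {z :: (real ^ 'n ^ 'm) \<times> (real ^ 'm).
    \<exists>x l j. l \<noteq> 0 \<and> transpose (fst z) *v l = signed_powr_vec p x \<and> fst z *v x = snd z \<and> x $ j = 0}"
proof -
  have "negligible (kkt_param p k ` {z :: (real ^ 'n ^ 'm) \<times> (real ^ 'm). fst z $ k $ j = 0 \<and> snd z $ k \<noteq> 0})"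
    for j k
    by (intro negligible_differentiable_image_negligible[OF order_refl]
        negligible_subset[OF negligible_fst_component_eq_0]
        differentiable_at_imp_differentiable_on differentiable_kkt_param assms)
       auto
  then have "negligible (\<Union>j. \<Union>k. kkt_param p k ` {z :: (real ^ 'n ^ 'm) \<times> (real ^ 'm).
      fst z $ k $ j = 0 \<and> snd z $ k \<noteq> 0})"
    by (intro negligible_Union) auto
  moreover have "{z :: (real ^ 'n ^ 'm) \<times> (real ^ 'm).
    \<exists>x l j. l \<noteq> 0 \<and> transpose (fst z) *v l = signed_powr_vec p x \<and> fst z *v x = snd z \<and> x $ j = 0}
      \<subseteq> (\<Union>j. \<Union>k. kkt_param p k ` {z. fst z $ k $ j = 0 \<and> snd z $ k \<noteq> 0})"
  proof
    fix z :: "(real ^ 'n ^ 'm) \<times> (real ^ 'm)"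
    assume "z \<in> {z. \<exists>x l j. l \<noteq> 0 \<and> transpose (fst z) *v l = signed_powr_vec p x \<and>
      fst z *v x = snd z \<and> x $ j = 0}"
    then obtain x l j k where "transpose (fst z) *v l = signed_powr_vec p x" "l $ k \<noteq> 0"
      "x $ j = 0" "fst z *v x = snd z"
      by (auto simp: vec_eq_iff)
    from sparse_kkt_point_in_kkt_param_image[OF this(1-3)] this(4)
    show "z \<in> (\<Union>j. \<Union>k. kkt_param p k ` {z. fst z $ k $ j = 0 \<and> snd z $ k \<noteq> 0})"
      by auto
  qed
  ultimately show ?thesis
    by (rule negligible_subset)
qed

lemma AE_lborel_outside_negligible:
  fixes N :: "'a::euclidean_space set"
  assumes "negligible N" "\<And>x. x \<notin> N \<Longrightarrow> P x"
  shows "AE x in lborel. P x"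
proof -
  have "AE x in lebesgue. P x"
    unfolding eventually_ae_filter_negligible using assms by blast
  then show ?thesis
    by (rule AE_completion_iff[THEN iffD1])
qed

lemma lp_optimal_unique_full_support:
  fixes A :: "real ^ 'n ^ 'm"
  assumes "p > 1" "y \<noteq> 0"
    and full_rank: "\<And>l. transpose A *v l = 0 \<Longrightarrow> l = 0"
    and no_sparse_kkt:
      "\<And>x l j. l \<noteq> 0 \<Longrightarrow> transpose A *v l = signed_powr_vec p x \<Longrightarrow> A *v x = y \<Longrightarrow> x $ j \<noteq> 0"
  shows "(\<exists>!x. lp_optimal p A y x) \<and> (\<forall>x. lp_optimal p A y x \<longrightarrow> card (supp x) = CARD('n))"
proof -
  obtain x0 where "A *v x0 = y"
    using in_range_transpose_if_orthogonal_null_space[of "transpose A" y] full_rank by force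
  then obtain x where "lp_optimal p A y x"
    using lp_optimal_exists[OF assms(1)] by blast
  then have "\<exists>!x. lp_optimal p A y x"
    using lp_optimal_unique[OF assms(1)] by blast
  moreover have "supp x = UNIV" if opt: "lp_optimal p A y x" for x
  proof -
    obtain l where l: "transpose A *v l = signed_powr_vec p x"
      using lp_optimal_multiplier[OF assms(1) opt] by blast
    have "A *v x = y"
      using opt by (simp add: lp_optimal_def)
    moreover have "l \<noteq> 0"
    proof
      assume "l = 0"
      then have "signed_powr_vec p x = 0"
        using l by simp
      then have "x = 0"
        by (simp add: signed_powr_vec_def vec_eq_iff)
      then show False
        using \<open>A *v x = y\<close> \<open>y \<noteq> 0\<close> by simp
    qed
    ultimately show ?thesis
      using no_sparse_kkt l by (auto simp: supp_def)
  qed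
  ultimately show ?thesis
    by simp
qed

theorem proposition4p1:
  fixes p :: real
  assumes "p \<ge> 2"
    and "CARD('m::finite) \<le> CARD('n::finite)"
  shows "AE Ay in (lborel :: ((real ^ 'n ^ 'm) \<times> (real ^ 'm)) measure).
           (\<exists>!x. lp_optimal p (fst Ay) (snd Ay) x) \<and>
           (\<forall>x. lp_optimal p (fst Ay) (snd Ay) x \<longrightarrow> card (supp x) = CARD('n))"
proof -
  define bad :: "((real ^ 'n ^ 'm) \<times> (real ^ 'm)) set" where
    "bad = {z. snd z = 0} \<union> {z. \<exists>l. l \<noteq> 0 \<and> transpose (fst z) *v l = 0} \<union>
       {z. \<exists>x l j. l \<noteq> 0 \<and> transpose (fst z) *v l = signed_powr_vec p x \<and> fst z *v x = snd z \<and> x $ j = 0}"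
  show ?thesis
  proof (rule AE_lborel_outside_negligible)
    show "negligible bad"
      unfolding bad_def
      by (intro negligible_Un negligible_snd_eq_0 negligible_rank_deficient[OF assms(2)]
          negligible_sparse_kkt[OF assms(1)])
    fix z assume "z \<notin> bad"
    show "(\<exists>!x. lp_optimal p (fst z) (snd z) x) \<and>
        (\<forall>x. lp_optimal p (fst z) (snd z) x \<longrightarrow> card (supp x) = CARD('n))"
    proof (rule lp_optimal_unique_full_support)
      show "p > 1"
        using assms(1) by simp
      show "snd z \<noteq> 0"
        using \<open>z \<notin> bad\<close> by (simp add: bad_def)
      show "l = 0" if "transpose (fst z) *v l = 0" for l
        using \<open>z \<notin> bad\<close> that unfolding bad_def by blast
      show "x $ j \<noteq> 0"
        if "l \<noteq> 0" "transpose (fst z) *v l = signed_powr_vec p x" "fst z *v x = snd z" for x l j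
        using \<open>z \<notin> bad\<close> that unfolding bad_def by blast
    qed
  qed
qed

end
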